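(* Let $F$ be a (randomized) mechanism for the multi-agent kidney exchange game, and for each agent $i$ let $x_i$ be the random variable giving the utility of agent $i$ in $F$. Then there exists a mechanism $F^*$ such that for every input graph and every agent $i$, $\mathrm{Var}(y_i)\le \frac{\mathrm{Var}(x_i)}{2}+1$ and $E[y_i]=E[x_i]$, where $y_i$ is the random variable giving the utility of agent $i$ in $F^*$.
   Context: An instance of the multi-agent kidney exchange game is a graph $G=(V,E)$ together with a partition $V=V_1\cup\dots\cup V_m$ of its vertices among $m$ agents. A mechanism maps each instance to a (possibly random) matching of $G$. The utility of agent $i$ with respect to a matching $M$ is the number of vertices of $V_i$ covered by $M$; the utility of agent $i$ in a mechanism is this quantity for the (random) matching output by the mechanism. *)

theory Defs
  imports "HOL-Probability.Probability"
begin

text \<open>An instance of the multi-agent kidney exchange game: a finite simple undirected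
graph (vertex set, edges as 2-element vertex sets) together with a partition of the
vertex set among agents 0, ..., m-1 (agent i owns the vertex set parts i).\<close>

record 'v kx_instance =
  verts :: "'v set"
  edges :: "'v set set"
  agents :: nat
  parts :: "nat \<Rightarrow> 'v set"

definition valid_instance :: "'v kx_instance \<Rightarrow> bool" where
  "valid_instance I \<longleftrightarrow>
     finite (verts I) \<and>
     edges I \<subseteq> {{u, v} | u v. u \<in> verts I \<and> v \<in> verts I \<and> u \<noteq> v} \<and>
     (\<Union>i<agents I. parts I i) = verts I \<and>
     disjoint_family_on (parts I) {..<agents I}"

definition is_matching :: "'v set set \<Rightarrow> 'v set set \<Rightarrow> bool" where
  "is_matching E M \<longleftrightarrow> M \<subseteq> E \<and> (\<forall>e\<in>M. \<forall>f\<in>M. e \<noteq> f \<longrightarrow> e \<inter> f = {})"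

definition mechanism :: "('v kx_instance \<Rightarrow> 'v set set pmf) \<Rightarrow> bool" where
  "mechanism F \<longleftrightarrow>
     (\<forall>I. valid_instance I \<longrightarrow> (\<forall>M\<in>set_pmf (F I). is_matching (edges I) M))"

definition utility :: "'v kx_instance \<Rightarrow> nat \<Rightarrow> 'v set set \<Rightarrow> real" where
  "utility I i M = real (card (parts I i \<inter> \<Union>M))"

end

theory Submission
  imports Defs
begin

text \<open>Draw two matchings $M_1, M_2$ independently from $F$. Their symmetric difference splits
  into alternating paths and cycles, and a component changes the coverage only at its (at most
  two) endpoints; so the per-agent signed change of coverage of a component is an integer vector
  of $\ell_1$-norm at most 2. Such vectors can be signed so that every coordinate of the signed
  sum lies in $[-2, 2]$. Swapping $M_1$ and $M_2$ on the negatively signed components yields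
  matchings $N_1, N_2$ which together cover, for every agent, as many of its vertices as $M_1$
  and $M_2$, while their individual coverages differ by at most 2. The new mechanism outputs
  $N_1$ or $N_2$ with probability $1/2$ each. It keeps the mean, and its variance is that of the
  average of two independent samples, $\mathrm{Var}(x)/2$, plus the variance of a fair choice
  between two values at distance at most 2, which is at most 1.\<close>

section \<open>Signing integer vectors of $\ell_1$-norm at most 2\<close>

lemma l1_norm_cancel_le:
  fixes x y :: "'i \<Rightarrow> int"
  assumes "finite I" "i \<in> I" "x i \<noteq> 0" "y i \<noteq> 0"
    and "(\<Sum>j\<in>I. \<bar>x j\<bar>) \<le> 2" "(\<Sum>j\<in>I. \<bar>y j\<bar>) \<le> 2"
  shows "(\<Sum>j\<in>I. \<bar>x j - sgn (x i * y i) * y j\<bar>) \<le> 2"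
proof -
  let ?c = "sgn (x i * y i)"
  have c: "\<bar>?c\<bar> = 1" using assms(3,4) by (simp add: abs_sgn_eq_1)
  have at_i: "\<bar>x i - ?c * y i\<bar> \<le> \<bar>x i\<bar> + \<bar>y i\<bar> - 2"
    using assms(3,4)
    by (cases "x i > 0"; cases "y i > 0") (auto simp: sgn_mult sgn_if zero_less_mult_iff)
  have elsewhere: "\<bar>x j - ?c * y j\<bar> \<le> \<bar>x j\<bar> + \<bar>y j\<bar>" for j
    using abs_triangle_ineq4[of "x j" "?c * y j"] c by (simp add: abs_mult)
  have "(\<Sum>j\<in>I. \<bar>x j - ?c * y j\<bar>) = \<bar>x i - ?c * y i\<bar> + (\<Sum>j\<in>I - {i}. \<bar>x j - ?c * y j\<bar>)"
    using assms(1,2) by (simp add: sum.remove)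
  also have "\<dots> \<le> (\<bar>x i\<bar> + \<bar>y i\<bar> - 2) + (\<Sum>j\<in>I - {i}. \<bar>x j\<bar> + \<bar>y j\<bar>)"
    using at_i elsewhere by (intro add_mono sum_mono) auto
  also have "\<dots> = (\<Sum>j\<in>I. \<bar>x j\<bar>) + (\<Sum>j\<in>I. \<bar>y j\<bar>) - 2"
    using assms(1,2) by (simp add: sum.remove sum.distrib)
  finally show ?thesis using assms(5,6) by linarith
qed

lemma abs_sum_le_2_of_disjoint_supports:
  fixes a :: "'b \<Rightarrow> 'i \<Rightarrow> int"
  assumes "finite P" "finite I" "i \<in> I" "\<forall>B\<in>P. (\<Sum>j\<in>I. \<bar>a B j\<bar>) \<le> 2"
    and "\<forall>k\<in>P. \<forall>l\<in>P. k \<noteq> l \<longrightarrow> a k i = 0 \<or> a l i = 0"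
  shows "\<bar>\<Sum>B\<in>P. a B i\<bar> \<le> 2"
proof (cases "\<exists>B\<in>P. a B i \<noteq> 0")
  case True
  then obtain B where B: "B \<in> P" "a B i \<noteq> 0" by blast
  have "(\<Sum>B'\<in>P. a B' i) = a B i + (\<Sum>B'\<in>P - {B}. a B' i)"
    using assms(1) B(1) by (rule sum.remove)
  also have "(\<Sum>B'\<in>P - {B}. a B' i) = 0"
    using assms(5) B by (intro sum.neutral) blast
  finally have "(\<Sum>B'\<in>P. a B' i) = a B i" by simp
  moreover have "\<bar>a B i\<bar> \<le> (\<Sum>j\<in>I. \<bar>a B j\<bar>)"
    using assms(2,3) by (intro member_le_sum) auto
  ultimately show ?thesis using assms(4) B(1) by fastforce
qed simp

lemma signed_sum_merge:
  fixes a :: "'b \<Rightarrow> 'i \<Rightarrow> int"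
  assumes "finite P" "k \<in> P" "l \<in> P" "k \<noteq> l"
  shows "(\<Sum>B\<in>P. (\<epsilon>(l := c * \<epsilon> k)) B * a B j)
       = (\<Sum>B\<in>P - {l}. \<epsilon> B * (a(k := \<lambda>j. a k j + c * a l j)) B j)"
proof -
  have "(\<Sum>B\<in>P - {l}. \<epsilon> B * (a(k := \<lambda>j. a k j + c * a l j)) B j)
      = (\<Sum>B\<in>P - {l}. \<epsilon> B * a B j + (if B = k then \<epsilon> k * c * a l j else 0))"
    by (intro sum.cong) (auto simp: algebra_simps)
  also have "\<dots> = (\<Sum>B\<in>P - {l}. \<epsilon> B * a B j) + \<epsilon> k * c * a l j"
    using assms by (simp add: sum.distrib)
  also have "(\<Sum>B\<in>P - {l}. \<epsilon> B * a B j) = (\<Sum>B\<in>P - {l}. (\<epsilon>(l := c * \<epsilon> k)) B * a B j)"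
    by (intro sum.cong) auto
  finally show ?thesis
    using assms(1,3) by (simp add: sum.remove algebra_simps)
qed

text \<open>Two vectors sharing a coordinate can be merged into one vector of $\ell_1$-norm at most 2
  by adding or subtracting them so that this coordinate partially cancels; induct on the number
  of vectors.\<close>

lemma signing_of_l1_le_2_vectors:
  fixes a :: "'b \<Rightarrow> 'i \<Rightarrow> int"
  assumes "finite P" "finite I" "\<forall>B\<in>P. (\<Sum>i\<in>I. \<bar>a B i\<bar>) \<le> 2"
  shows "\<exists>\<epsilon>. (\<forall>B. \<epsilon> B = 1 \<or> \<epsilon> B = -1) \<and> (\<forall>i\<in>I. \<bar>\<Sum>B\<in>P. \<epsilon> B * a B i\<bar> \<le> 2)"
  using assms(1,3)
proof (induction "card P" arbitrary: P a rule: less_induct)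
  case less
  show ?case
  proof (cases "\<exists>k\<in>P. \<exists>l\<in>P. \<exists>i\<in>I. k \<noteq> l \<and> a k i \<noteq> 0 \<and> a l i \<noteq> 0")
    case True
    then obtain k l i where kl: "k \<in> P" "l \<in> P" "i \<in> I" "k \<noteq> l" "a k i \<noteq> 0" "a l i \<noteq> 0"
      by blast
    define c where "c = - sgn (a k i * a l i)"
    define a' where "a' = a(k := \<lambda>j. a k j + c * a l j)"
    have c: "c = 1 \<or> c = -1" using kl(5,6) by (auto simp: c_def sgn_if)
    have "\<forall>B\<in>P - {l}. (\<Sum>j\<in>I. \<bar>a' B j\<bar>) \<le> 2"
      using less.prems(2) l1_norm_cancel_le[of I i "a k" "a l"] assms(2) kl
      by (auto simp: a'_def c_def)
    moreover have "card (P - {l}) < card P" using less.prems(1) kl(2) by (rule card_Diff1_less)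
    ultimately obtain \<epsilon> where \<epsilon>: "\<forall>B. \<epsilon> B = 1 \<or> \<epsilon> B = -1"
      "\<forall>j\<in>I. \<bar>\<Sum>B\<in>P - {l}. \<epsilon> B * a' B j\<bar> \<le> 2"
      using less.hyps less.prems(1) by blast
    show ?thesis
    proof (intro exI conjI ballI allI)
      show "(\<epsilon>(l := c * \<epsilon> k)) B = 1 \<or> (\<epsilon>(l := c * \<epsilon> k)) B = -1" for B
        using \<epsilon>(1) c by auto
      show "\<bar>\<Sum>B\<in>P. (\<epsilon>(l := c * \<epsilon> k)) B * a B j\<bar> \<le> 2" if "j \<in> I" for j
        unfolding signed_sum_merge[OF less.prems(1) kl(1,2,4)] using \<epsilon>(2) that
        unfolding a'_def by blast
    qed
  next
    case False
    then have "\<forall>i\<in>I. \<bar>\<Sum>B\<in>P. 1 * a B i\<bar> \<le> 2"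
      using abs_sum_le_2_of_disjoint_supports[OF less.prems(1) assms(2) _ less.prems(2)]
      by fastforce
    then show ?thesis by (intro exI[of _ "\<lambda>_. 1"]) auto
  qed
qed

lemma sum_signs_eq_diff:
  fixes x :: "'b \<Rightarrow> 'a::ring_1"
  assumes "finite P" "\<forall>B. \<epsilon> B = 1 \<or> \<epsilon> B = -1"
  shows "(\<Sum>B\<in>P. \<epsilon> B * x B) = (\<Sum>B\<in>{B\<in>P. \<epsilon> B = 1}. x B) - (\<Sum>B\<in>P - {B\<in>P. \<epsilon> B = 1}. x B)"
proof -
  have "(\<Sum>B\<in>P. \<epsilon> B * x B)
      = (\<Sum>B\<in>{B\<in>P. \<epsilon> B = 1}. \<epsilon> B * x B) + (\<Sum>B\<in>P - {B\<in>P. \<epsilon> B = 1}. \<epsilon> B * x B)"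
    using assms(1) by (subst sum.subset_diff[of "{B\<in>P. \<epsilon> B = 1}"]) auto
  also have "(\<Sum>B\<in>P - {B\<in>P. \<epsilon> B = 1}. \<epsilon> B * x B) = (\<Sum>B\<in>P - {B\<in>P. \<epsilon> B = 1}. - x B)"
  proof (rule sum.cong[OF refl])
    fix B assume "B \<in> P - {B\<in>P. \<epsilon> B = 1}"
    then have "\<epsilon> B = -1" using assms(2) by auto
    then show "\<epsilon> B * x B = - x B" by simp
  qed
  finally show ?thesis by (simp add: sum_negf)
qed

section \<open>Resplitting a pair of independent samples\<close>

lemma expectation_pmf_of_pair:
  fixes f :: "'a \<Rightarrow> real"
  shows "measure_pmf.expectation (pmf_of_set {u, v}) f = (f u + f v) / 2"
  by (cases "u = v") (simp_all add: integral_pmf_of_set)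

lemma expectation_resplit:
  fixes p :: "'a pmf" and f :: "'a \<Rightarrow> real" and g h :: "'a \<Rightarrow> 'a \<Rightarrow> 'a"
  assumes "finite (set_pmf p)"
  shows "measure_pmf.expectation (p \<bind> (\<lambda>a. p \<bind> (\<lambda>b. pmf_of_set {g a b, h a b}))) f
    = (\<Sum>a\<in>set_pmf p. \<Sum>b\<in>set_pmf p. pmf p a * pmf p b * ((f (g a b) + f (h a b)) / 2))"
proof -
  have inner: "measure_pmf.expectation (p \<bind> (\<lambda>b. pmf_of_set {g a b, h a b})) f
      = (\<Sum>b\<in>set_pmf p. pmf p b * ((f (g a b) + f (h a b)) / 2))" for a
    using assms by (subst pmf_expectation_bind) (auto simp: expectation_pmf_of_pair)
  show ?thesis
    using assms
    by (subst pmf_expectation_bind[where A = "set_pmf p"])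
       (auto simp: inner sum_distrib_left mult.assoc)
qed

lemma weighted_pair_sums:
  fixes w u :: "'a \<Rightarrow> real"
  assumes "(\<Sum>a\<in>S. w a) = 1"
  shows "(\<Sum>a\<in>S. \<Sum>b\<in>S. w a * w b * ((u a + u b) / 2)) = (\<Sum>a\<in>S. w a * u a)"
    and "(\<Sum>a\<in>S. \<Sum>b\<in>S. w a * w b * ((u a + u b)\<^sup>2 / 4 + 1))
       = (\<Sum>a\<in>S. w a * (u a)\<^sup>2) / 2 + (\<Sum>a\<in>S. w a * u a)\<^sup>2 / 2 + 1"
proof -
  let ?W = "\<Sum>a\<in>S. w a" and ?X = "\<Sum>a\<in>S. w a * u a" and ?Y = "\<Sum>a\<in>S. w a * (u a)\<^sup>2"
  have "(\<Sum>a\<in>S. \<Sum>b\<in>S. w a * w b * ((u a + u b) / 2))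
      = (\<Sum>a\<in>S. \<Sum>b\<in>S. (w a * u a) * w b / 2 + w a * (w b * u b) / 2)"
    by (intro sum.cong) (auto simp: field_simps)
  also have "\<dots> = ?X * ?W / 2 + ?W * ?X / 2"
    by (simp add: sum.distrib sum_product sum_divide_distrib)
  finally show "(\<Sum>a\<in>S. \<Sum>b\<in>S. w a * w b * ((u a + u b) / 2)) = ?X"
    using assms by simp
  have "(\<Sum>a\<in>S. \<Sum>b\<in>S. w a * w b * ((u a + u b)\<^sup>2 / 4 + 1))
      = (\<Sum>a\<in>S. \<Sum>b\<in>S. (w a * (u a)\<^sup>2) * w b / 4 + (w a * u a) * (w b * u b) / 2
                         + w a * (w b * (u b)\<^sup>2) / 4 + w a * w b)"
    by (intro sum.cong) (auto simp: field_simps power2_eq_square)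
  also have "\<dots> = ?Y * ?W / 4 + ?X * ?X / 2 + ?W * ?Y / 4 + ?W * ?W"
    by (simp add: sum.distrib sum_product sum_divide_distrib)
  finally show "(\<Sum>a\<in>S. \<Sum>b\<in>S. w a * w b * ((u a + u b)\<^sup>2 / 4 + 1)) = ?Y / 2 + ?X\<^sup>2 / 2 + 1"
    using assms by (simp add: power2_eq_square)
qed

lemma mean_square_le_of_sum_and_gap:
  fixes y z s :: real
  assumes "y + z = s" "\<bar>y - z\<bar> \<le> 2"
  shows "(y\<^sup>2 + z\<^sup>2) / 2 \<le> s\<^sup>2 / 4 + 1"
proof -
  have "(y - z)\<^sup>2 \<le> 2\<^sup>2" using assms(2) by (metis abs_le_square_iff abs_numeral)
  moreover have "(y\<^sup>2 + z\<^sup>2) / 2 = (y + z)\<^sup>2 / 4 + (y - z)\<^sup>2 / 4"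
    by (simp add: field_simps power2_eq_square)
  ultimately show ?thesis using assms(1) by simp
qed

lemma expectation_variance_balanced_resplit:
  fixes p :: "'a pmf" and x :: "'a \<Rightarrow> real" and g h :: "'a \<Rightarrow> 'a \<Rightarrow> 'a"
  assumes fin: "finite (set_pmf p)"
    and sum: "\<And>a b. a \<in> set_pmf p \<Longrightarrow> b \<in> set_pmf p \<Longrightarrow> x (g a b) + x (h a b) = x a + x b"
    and gap: "\<And>a b. a \<in> set_pmf p \<Longrightarrow> b \<in> set_pmf p \<Longrightarrow> \<bar>x (g a b) - x (h a b)\<bar> \<le> 2"
  defines "q \<equiv> p \<bind> (\<lambda>a. p \<bind> (\<lambda>b. pmf_of_set {g a b, h a b}))"
  shows "measure_pmf.expectation q x = measure_pmf.expectation p x"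
    and "measure_pmf.variance q x \<le> measure_pmf.variance p x / 2 + 1"
proof -
  let ?S = "set_pmf p" and ?w = "pmf p"
  have w: "(\<Sum>a\<in>?S. ?w a) = 1" using fin by (rule sum_pmf_eq_1) simp
  have Ep: "measure_pmf.expectation p f = (\<Sum>a\<in>?S. ?w a * f a)" for f :: "'a \<Rightarrow> real"
    using integral_measure_pmf[OF fin, of p f] by (simp add: mult.commute)
  have fin_q: "finite (set_pmf q)" unfolding q_def using fin by simp
  show mean: "measure_pmf.expectation q x = measure_pmf.expectation p x"
    unfolding q_def expectation_resplit[OF fin] Ep weighted_pair_sums(1)[OF w, symmetric]
    using sum by (intro sum.cong) auto
  have "measure_pmf.expectation q (\<lambda>z. (x z)\<^sup>2)
      \<le> (\<Sum>a\<in>?S. \<Sum>b\<in>?S. ?w a * ?w b * ((x a + x b)\<^sup>2 / 4 + 1))"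
    unfolding q_def expectation_resplit[OF fin]
    using mean_square_le_of_sum_and_gap[OF sum gap]
    by (intro sum_mono mult_left_mono) auto
  also have "\<dots> = measure_pmf.expectation p (\<lambda>z. (x z)\<^sup>2) / 2
      + (measure_pmf.expectation p x)\<^sup>2 / 2 + 1"
    unfolding Ep by (rule weighted_pair_sums(2)[OF w])
  finally have second_moment: "measure_pmf.expectation q (\<lambda>z. (x z)\<^sup>2)
      \<le> measure_pmf.expectation p (\<lambda>z. (x z)\<^sup>2) / 2 + (measure_pmf.expectation p x)\<^sup>2 / 2 + 1" .
  have variance: "measure_pmf.variance r x
      = measure_pmf.expectation r (\<lambda>z. (x z)\<^sup>2) - (measure_pmf.expectation r x)\<^sup>2"
    if "finite (set_pmf r)" for r
    using that by (intro measure_pmf.variance_eq integrable_measure_pmf_finite)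
  show "measure_pmf.variance q x \<le> measure_pmf.variance p x / 2 + 1"
    using variance[OF fin_q] variance[OF fin] second_moment by (simp add: mean field_simps)
qed

lemma sum_abs_sum_parts_le:
  fixes s :: "'a \<Rightarrow> 'b::ordered_ab_group_add_abs"
  assumes "finite V" "finite I" "\<And>i. i \<in> I \<Longrightarrow> p i \<subseteq> V" "disjoint_family_on p I"
  shows "(\<Sum>i\<in>I. \<bar>\<Sum>v\<in>p i. s v\<bar>) \<le> (\<Sum>v\<in>V. \<bar>s v\<bar>)"
proof -
  have fin: "finite (p i)" if "i \<in> I" for i by (rule finite_subset[OF assms(3)[OF that] assms(1)])
  have "(\<Sum>i\<in>I. \<bar>\<Sum>v\<in>p i. s v\<bar>) \<le> (\<Sum>i\<in>I. \<Sum>v\<in>p i. \<bar>s v\<bar>)"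
    by (intro sum_mono sum_abs)
  also have "\<dots> = (\<Sum>v\<in>(\<Union>i\<in>I. p i). \<bar>s v\<bar>)"
    using assms(2,4) fin unfolding disjoint_family_on_def
    by (intro sum.UNION_disjoint[symmetric]) auto
  also have "\<dots> \<le> (\<Sum>v\<in>V. \<bar>s v\<bar>)"
    using assms(1,3) by (intro sum_mono2) auto
  finally show ?thesis .
qed

lemma card_le_card_Int_UNION:
  assumes "finite S" "disjoint_family_on f T" "\<forall>B\<in>T. S \<inter> f B \<noteq> {}"
  shows "card T \<le> card (S \<inter> \<Union>(f ` T))"
proof -
  define g where "g B = (SOME v. v \<in> S \<inter> f B)" for B
  have g: "g B \<in> S \<inter> f B" if "B \<in> T" for B
    unfolding g_def by (rule someI_ex) (use assms(3) that in blast)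
  have "inj_on g T"
  proof (rule inj_onI)
    fix B B' assume "B \<in> T" "B' \<in> T" "g B = g B'"
    then have "g B \<in> f B \<inter> f B'" using g by (metis IntD2 IntI)
    then show "B = B'"
      using assms(2) \<open>B \<in> T\<close> \<open>B' \<in> T\<close> unfolding disjoint_family_on_def by blast
  qed
  moreover have "g ` T \<subseteq> S \<inter> \<Union>(f ` T)" using g by blast
  ultimately show ?thesis by (rule card_inj_on_le) (use assms(1) in simp)
qed

lemma disjoint_family_on_Union_merge:
  fixes e :: "'a set" and P :: "'a set set set"
  assumes "disjoint_family_on Union P"
  defines "T \<equiv> {B \<in> P. e \<inter> \<Union>B \<noteq> {}}"
  shows "disjoint_family_on Union (insert (insert e (\<Union>T)) (P - T))"
proof -
  have apart: "\<Union>B \<inter> \<Union>(insert e (\<Union>T)) = {}" if "B \<in> P - T" for B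
  proof -
    have "\<Union>B \<inter> \<Union>B' = {}" if "B' \<in> T" for B'
      using assms(1) \<open>B \<in> P - T\<close> that unfolding T_def disjoint_family_on_def by blast
    moreover have "\<Union>B \<inter> e = {}" using that unfolding T_def by blast
    ultimately show ?thesis by auto
  qed
  have "disjoint_family_on Union (P - T)"
    using assms(1) by (rule disjoint_family_on_mono[rotated]) blast
  then show ?thesis
    using apart unfolding disjoint_family_on_def by (metis Int_commute insert_iff)
qed

section \<open>Matchings and signed degrees\<close>

lemma is_matching_subset: "is_matching E M \<Longrightarrow> N \<subseteq> M \<Longrightarrow> is_matching E N"
  unfolding is_matching_def by (meson subset_iff order_trans)

lemma matching_eq_if_common_vertex:
  assumes "is_matching E M" "g \<in> M" "h \<in> M" "v \<in> g" "v \<in> h"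
  shows "g = h"
  using assms unfolding is_matching_def by (metis disjoint_iff)

lemma swap_is_matching:
  assumes "is_matching E M1" "is_matching E M2" "B \<subseteq> M1 \<union> M2" "\<Union>A \<inter> \<Union>B = {}"
  shows "is_matching E (M1 \<inter> M2 \<union> A \<inter> M1 \<union> (B - M1))"
  unfolding is_matching_def
proof (intro conjI ballI impI)
  have "M1 \<subseteq> E" "M2 \<subseteq> E" using assms(1,2) unfolding is_matching_def by auto
  then show "M1 \<inter> M2 \<union> A \<inter> M1 \<union> (B - M1) \<subseteq> E" using assms(3) by auto
next
  fix f g assume f: "f \<in> M1 \<inter> M2 \<union> A \<inter> M1 \<union> (B - M1)" and g: "g \<in> M1 \<inter> M2 \<union> A \<inter> M1 \<union> (B - M1)"
    and "f \<noteq> g"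
  consider "f \<in> M1" "g \<in> M1" | "f \<in> M2" "g \<in> M2" | "f \<in> A" "g \<in> B" | "f \<in> B" "g \<in> A"
    using f g assms(3) by auto
  then show "f \<inter> g = {}"
  proof cases
    case 1
    then show ?thesis using assms(1) \<open>f \<noteq> g\<close> unfolding is_matching_def by blast
  next
    case 2
    then show ?thesis using assms(2) \<open>f \<noteq> g\<close> unfolding is_matching_def by blast
  qed (use assms(4) in auto)
qed

definition degree_in :: "'v set set \<Rightarrow> 'v \<Rightarrow> int" where
  "degree_in Y v = (\<Sum>f\<in>Y. of_bool (v \<in> f))"

definition signed_degree :: "'v set set \<Rightarrow> 'v set set \<Rightarrow> 'v \<Rightarrow> int" where
  "signed_degree M Y v = (\<Sum>f\<in>Y. if v \<in> f then (if f \<in> M then 1 else -1) else 0)"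

text \<open>A path alternating between $M$ and another matching has imbalance 2 (at its two ends),
  an alternating cycle has imbalance 0.\<close>

definition imbalance :: "'v set set \<Rightarrow> 'v set \<Rightarrow> 'v set set \<Rightarrow> int" where
  "imbalance M V Y = (\<Sum>v\<in>V. \<bar>signed_degree M Y v\<bar>)"

lemma degree_in_matching:
  assumes "finite N" "is_matching E N"
  shows "degree_in N v = of_bool (v \<in> \<Union>N)"
proof -
  have "\<forall>f\<in>N \<inter> {f. v \<in> f}. \<forall>g\<in>N \<inter> {f. v \<in> f}. f = g"
    using assms(2) unfolding is_matching_def by blast
  then have "card (N \<inter> {f. v \<in> f}) \<le> 1"
    using assms(1) by (simp add: card_le_Suc0_iff_eq)
  moreover have "card (N \<inter> {f. v \<in> f}) = 0 \<longleftrightarrow> v \<notin> \<Union>N"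
    using assms(1) by auto
  ultimately show ?thesis
    unfolding degree_in_def using assms(1) by (cases "card (N \<inter> {f. v \<in> f})") auto
qed

lemma card_Int_Union_matching:
  assumes "finite S" "finite N" "is_matching E N"
  shows "int (card (S \<inter> \<Union>N)) = (\<Sum>v\<in>S. degree_in N v)"
  using assms by (simp add: degree_in_matching Int_def)

lemma signed_degree_eq_degree_diff:
  assumes "finite Y"
  shows "signed_degree M Y v = degree_in (Y \<inter> M) v - degree_in (Y - M) v"
proof -
  have "degree_in (Y \<inter> M) v = (\<Sum>f\<in>Y. if f \<in> M then of_bool (v \<in> f) else 0)"
    "degree_in (Y - M) v = (\<Sum>f\<in>Y. if f \<notin> M then of_bool (v \<in> f) else 0)"
    unfolding degree_in_def using assms
    by (simp_all add: sum.inter_filter[symmetric] Int_def set_diff_eq)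
  then show ?thesis
    unfolding signed_degree_def by (auto simp: sum_subtractf[symmetric] intro!: sum.cong)
qed

lemma signed_degree_Union:
  assumes "\<forall>B\<in>T. finite B" "disjoint T"
  shows "signed_degree M (\<Union>T) v = (\<Sum>B\<in>T. signed_degree M B v)"
  unfolding signed_degree_def
  using sum.Union_disjoint[of T] assms by (simp add: pairwise_def disjnt_def)

lemma degree_in_swap:
  assumes "finite (M1 \<union> M2)" "A \<inter> B = {}" "A \<union> B = sym_diff M1 M2"
  shows "degree_in (M1 \<inter> M2 \<union> A \<inter> M1 \<union> (B - M1)) v + degree_in (M1 \<inter> M2 \<union> B \<inter> M1 \<union> (A - M1)) v
         = degree_in M1 v + degree_in M2 v"
    and "degree_in (M1 \<inter> M2 \<union> A \<inter> M1 \<union> (B - M1)) v - degree_in (M1 \<inter> M2 \<union> B \<inter> M1 \<union> (A - M1)) v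
         = signed_degree M1 A v - signed_degree M1 B v"
proof -
  let ?U = "M1 \<union> M2" and ?N1 = "M1 \<inter> M2 \<union> A \<inter> M1 \<union> (B - M1)"
    and ?N2 = "M1 \<inter> M2 \<union> B \<inter> M1 \<union> (A - M1)"
  let ?s = "\<lambda>Y f. if f \<in> Y \<and> v \<in> f then (if f \<in> M1 then 1 else -1) else 0 :: int"
  have deg: "degree_in Y v = (\<Sum>f\<in>?U. of_bool (f \<in> Y \<and> v \<in> f))" if "Y \<subseteq> ?U" for Y
    unfolding degree_in_def by (rule sum.mono_neutral_cong_left) (use that assms(1) in auto)
  have sdeg: "signed_degree M1 Y v = (\<Sum>f\<in>?U. ?s Y f)" if "Y \<subseteq> ?U" for Y
    unfolding signed_degree_def by (rule sum.mono_neutral_cong_left) (use that assms(1) in auto)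
  have cases: "f \<in> A \<and> f \<notin> B \<and> (f \<in> M1 \<longleftrightarrow> f \<notin> M2) \<or> f \<in> B \<and> f \<notin> A \<and> (f \<in> M1 \<longleftrightarrow> f \<notin> M2)
      \<or> f \<notin> A \<and> f \<notin> B \<and> (f \<in> M1 \<longleftrightarrow> f \<in> M2)" for f
    using assms(2,3) by blast
  have "of_bool (f \<in> ?N1 \<and> v \<in> f) + of_bool (f \<in> ?N2 \<and> v \<in> f)
      = (of_bool (f \<in> M1 \<and> v \<in> f) + of_bool (f \<in> M2 \<and> v \<in> f) :: int)" for f
    using cases[of f] by auto
  moreover have U: "?N1 \<subseteq> ?U" "?N2 \<subseteq> ?U" "M1 \<subseteq> ?U" "M2 \<subseteq> ?U" "A \<subseteq> ?U" "B \<subseteq> ?U"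
    using assms(3) by auto
  ultimately show "degree_in ?N1 v + degree_in ?N2 v = degree_in M1 v + degree_in M2 v"
    unfolding deg[OF U(1)] deg[OF U(2)] deg[OF U(3)] deg[OF U(4)] sum.distrib[symmetric]
    by (intro sum.cong) auto
  have "of_bool (f \<in> ?N1 \<and> v \<in> f) - of_bool (f \<in> ?N2 \<and> v \<in> f) = ?s A f - ?s B f" for f
    using cases[of f] by auto
  then show "degree_in ?N1 v - degree_in ?N2 v = signed_degree M1 A v - signed_degree M1 B v"
    unfolding deg[OF U(1)] deg[OF U(2)] sdeg[OF U(5)] sdeg[OF U(6)] sum_subtractf[symmetric]
    by (intro sum.cong) auto
qed

locale two_matchings =
  fixes E M1 M2 :: "'v set set" and V :: "'v set"
  assumes finite_V: "finite V"
    and edge_subset: "e \<in> E \<Longrightarrow> e \<subseteq> V"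
    and card_edge: "e \<in> E \<Longrightarrow> card e = 2"
    and matching_M1: "is_matching E M1" and matching_M2: "is_matching E M2"
begin

abbreviation D :: "'v set set" where
  "D \<equiv> sym_diff M1 M2"

lemma M12_subset_E: "M1 \<subseteq> E" "M2 \<subseteq> E"
  using matching_M1 matching_M2 unfolding is_matching_def by auto

lemma finite_M12: "finite (M1 \<union> M2)"
proof -
  have "M1 \<union> M2 \<subseteq> Pow V" using M12_subset_E edge_subset by auto
  then show ?thesis using finite_V by (meson finite_Pow_iff finite_subset)
qed

lemma finite_subset_D: "Y \<subseteq> D \<Longrightarrow> finite Y"
  by (rule finite_subset[OF _ finite_M12]) auto

lemma edge_nonempty:
  assumes "e \<in> M1 \<union> M2"
  shows "e \<noteq> {}"
proof -
  have "e \<in> E" using assms M12_subset_E by auto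
  then show ?thesis using card_edge by fastforce
qed

lemma disjoint_if_vertex_disjoint:
  assumes "disjoint_family_on Union P" "\<forall>B\<in>P. B \<subseteq> D"
  shows "disjoint P"
proof (rule pairwiseI)
  fix B B' assume "B \<in> P" "B' \<in> P" "B \<noteq> B'"
  then have apart: "\<Union>B \<inter> \<Union>B' = {}" using assms(1) unfolding disjoint_family_on_def by blast
  show "disjnt B B'"
  proof (rule ccontr)
    assume "\<not> disjnt B B'"
    then obtain f where "f \<in> B" "f \<in> B'" unfolding disjnt_def by blast
    moreover obtain v where "v \<in> f" using edge_nonempty \<open>f \<in> B\<close> \<open>B \<in> P\<close> assms(2) by blast
    ultimately show False using apart by blast
  qed
qed

lemma eq_if_same_side:
  assumes "g \<in> D" "h \<in> D" "v \<in> g" "v \<in> h" "g \<in> M1 \<longleftrightarrow> h \<in> M1"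
  shows "g = h"
proof -
  have "g \<in> M1 \<and> h \<in> M1 \<or> g \<in> M2 \<and> h \<in> M2" using assms(1,2,5) by auto
  then show ?thesis
    using matching_eq_if_common_vertex[OF matching_M1] matching_eq_if_common_vertex[OF matching_M2]
      assms(3,4) by blast
qed

lemma signed_degree_subset_D:
  assumes "Y \<subseteq> D"
  shows "signed_degree M1 Y v = of_bool (\<exists>f\<in>Y \<inter> M1. v \<in> f) - of_bool (\<exists>f\<in>Y - M1. v \<in> f)"
proof -
  have "Y - M1 \<subseteq> M2" using assms by blast
  then have "is_matching E (Y \<inter> M1)" "is_matching E (Y - M1)"
    using is_matching_subset[OF matching_M1] is_matching_subset[OF matching_M2] by auto
  then show ?thesis
    using finite_subset_D[OF assms] by (simp add: signed_degree_eq_degree_diff degree_in_matching)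
qed

lemma imbalance_single_edge:
  assumes "e \<in> E"
  shows "imbalance M1 V {e} = 2"
proof -
  have "imbalance M1 V {e} = (\<Sum>v\<in>V. of_bool (v \<in> e))"
    unfolding imbalance_def signed_degree_def by (intro sum.cong) auto
  also have "\<dots> = int (card e)"
    using finite_V edge_subset[OF assms] by (simp add: Int_absorb1 Int_def[symmetric])
  finally show ?thesis using card_edge[OF assms] by simp
qed

lemma finite_blocks: "\<forall>B\<in>T. B \<subseteq> D \<Longrightarrow> finite T"
  using finite_subset_D by (metis Pow_iff finite_Pow_iff finite_subset subsetI)

lemma signed_degree_insert_Union:
  assumes "e \<in> D" "\<forall>B\<in>T. B \<subseteq> D" "disjoint_family_on Union T" "e \<notin> \<Union>T"
  shows "signed_degree M1 (insert e (\<Union>T)) v = signed_degree M1 {e} v + (\<Sum>B\<in>T. signed_degree M1 B v)"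
proof -
  have "finite (\<Union>T)" using assms(2) by (intro finite_subset_D) blast
  then have "signed_degree M1 (insert e (\<Union>T)) v = signed_degree M1 {e} v + signed_degree M1 (\<Union>T) v"
    unfolding signed_degree_def using assms(4) by simp
  also have "signed_degree M1 (\<Union>T) v = (\<Sum>B\<in>T. signed_degree M1 B v)"
    using assms(2) finite_subset_D disjoint_if_vertex_disjoint[OF assms(3,2)]
    by (intro signed_degree_Union) auto
  finally show ?thesis .
qed

text \<open>At a vertex where the new edge $e$ meets a block, that block ends in an edge on the other
  side of $e$, so the merged block has signed degree 0 there instead of the $\pm 1$ of each
  part.\<close>

lemma abs_signed_degree_merge_le:
  assumes "e \<in> D" "\<forall>B\<in>T. B \<subseteq> D" "disjoint_family_on Union T" "e \<notin> \<Union>T"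
  shows "\<bar>signed_degree M1 (insert e (\<Union>T)) v\<bar> + 2 * of_bool (v \<in> e \<inter> \<Union>(\<Union>T))
       \<le> \<bar>signed_degree M1 {e} v\<bar> + (\<Sum>B\<in>T. \<bar>signed_degree M1 B v\<bar>)"
proof (cases "v \<in> e \<inter> \<Union>(\<Union>T)")
  case False
  have "\<bar>signed_degree M1 (insert e (\<Union>T)) v\<bar>
      \<le> \<bar>signed_degree M1 {e} v\<bar> + \<bar>\<Sum>B\<in>T. signed_degree M1 B v\<bar>"
    unfolding signed_degree_insert_Union[OF assms] by (rule abs_triangle_ineq)
  also have "\<bar>\<Sum>B\<in>T. signed_degree M1 B v\<bar> \<le> (\<Sum>B\<in>T. \<bar>signed_degree M1 B v\<bar>)"
    by (rule sum_abs)
  finally show ?thesis using False by (simp only: of_bool_eq(1) mult_zero_right add_0_right)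
next
  case True
  then obtain B f where B: "B \<in> T" "f \<in> B" "v \<in> f" "v \<in> e" by blast
  have BD: "B \<subseteq> D" using assms(2) B(1) by blast
  have "f \<noteq> e" using B(1,2) assms(4) by blast
  then have opposite: "f \<in> M1 \<longleftrightarrow> e \<notin> M1"
    using eq_if_same_side[OF _ assms(1) B(3,4)] BD B(2) by blast
  have no_same: "\<not> (\<exists>g\<in>B. v \<in> g \<and> (g \<in> M1 \<longleftrightarrow> e \<in> M1))"
    using eq_if_same_side[OF _ assms(1) _ B(4)] BD B(1) assms(4) by blast
  have "\<bar>signed_degree M1 B v\<bar> = 1"
    unfolding signed_degree_subset_D[OF BD] using B(2,3) opposite no_same by (cases "e \<in> M1") auto
  moreover have "signed_degree M1 (insert e (\<Union>T)) v = 0"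
  proof -
    have "insert e (\<Union>T) \<subseteq> D" using assms(1,2) by blast
    moreover have "f \<in> insert e (\<Union>T)" using B(1,2) by blast
    ultimately show ?thesis
      unfolding signed_degree_subset_D[OF \<open>insert e (\<Union>T) \<subseteq> D\<close>]
      using B(3,4) opposite by (cases "e \<in> M1") auto
  qed
  moreover have "\<bar>signed_degree M1 {e} v\<bar> = 1" using B(4) by (simp add: signed_degree_def)
  moreover have "\<bar>signed_degree M1 B v\<bar> \<le> (\<Sum>B\<in>T. \<bar>signed_degree M1 B v\<bar>)"
    using finite_blocks[OF assms(2)] B(1) by (intro member_le_sum) auto
  ultimately show ?thesis using True by simp
qed

lemma imbalance_merge_le_2:
  assumes "e \<in> D" "\<forall>B\<in>T. B \<subseteq> D" "disjoint_family_on Union T" "e \<notin> \<Union>T"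
    and "\<forall>B\<in>T. e \<inter> \<Union>B \<noteq> {}" "\<forall>B\<in>T. imbalance M1 V B \<le> 2"
  shows "imbalance M1 V (insert e (\<Union>T)) \<le> 2"
proof -
  let ?S = "e \<inter> \<Union>(\<Union>T)"
  have eE: "e \<in> E" using assms(1) M12_subset_E by blast
  have "card T \<le> card (e \<inter> \<Union>(Union ` T))"
    using assms(3,5) card_edge[OF eE]
    by (intro card_le_card_Int_UNION) (auto intro: card_ge_0_finite)
  moreover have "\<Union>(Union ` T) = \<Union>(\<Union>T)" by blast
  ultimately have card_T: "card T \<le> card ?S" by simp
  have "?S \<subseteq> V" using edge_subset[OF eE] by blast
  then have "(\<Sum>v\<in>V. of_bool (v \<in> ?S)) = int (card ?S)"
    using sum_of_bool_eq[of V "\<lambda>v. v \<in> ?S"] finite_V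
    by (simp only: Collect_mem_eq Int_absorb1 True_implies_equals)
  then have "(\<Sum>v\<in>V. 2 * of_bool (v \<in> ?S)) = 2 * int (card ?S)"
    by (simp add: sum_distrib_left[symmetric])
  then have "imbalance M1 V (insert e (\<Union>T)) + 2 * int (card ?S)
      = (\<Sum>v\<in>V. \<bar>signed_degree M1 (insert e (\<Union>T)) v\<bar> + 2 * of_bool (v \<in> ?S))"
    unfolding imbalance_def by (simp add: sum.distrib)
  also have "\<dots> \<le> (\<Sum>v\<in>V. \<bar>signed_degree M1 {e} v\<bar> + (\<Sum>B\<in>T. \<bar>signed_degree M1 B v\<bar>))"
    by (intro sum_mono abs_signed_degree_merge_le[OF assms(1-4)])
  also have "\<dots> = imbalance M1 V {e} + (\<Sum>B\<in>T. imbalance M1 V B)"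
    unfolding imbalance_def by (simp add: sum.distrib sum.swap[of _ T V])
  also have "\<dots> \<le> 2 + 2 * int (card T)"
    using imbalance_single_edge[OF eE] sum_mono[of T "imbalance M1 V" "\<lambda>_. 2"] assms(6) by simp
  finally show ?thesis using card_T by linarith
qed

text \<open>The blocks are (unions of) the alternating paths and cycles into which the symmetric
  difference decomposes; they are built edge by edge, merging all blocks the new edge touches.\<close>

lemma exists_partition_imbalance_le_2:
  assumes "X \<subseteq> D"
  shows "\<exists>P. \<Union>P = X \<and> disjoint_family_on Union P \<and> (\<forall>B\<in>P. imbalance M1 V B \<le> 2)"
  using finite_subset_D[OF assms] assms
proof (induction X rule: finite_induct)
  case empty
  then show ?case by (intro exI[of _ "{}"]) (auto simp: disjoint_family_on_def)
next
  case (insert e X)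
  then obtain P where P: "\<Union>P = X" "disjoint_family_on Union P" "\<forall>B\<in>P. imbalance M1 V B \<le> 2"
    by auto
  define T where "T = {B \<in> P. e \<inter> \<Union>B \<noteq> {}}"
  have "imbalance M1 V (insert e (\<Union>T)) \<le> 2"
  proof (rule imbalance_merge_le_2)
    show "disjoint_family_on Union T"
      using P(2) by (rule disjoint_family_on_mono[rotated]) (auto simp: T_def)
  qed (use insert.hyps(2) insert.prems P in \<open>auto simp: T_def\<close>)
  moreover have "\<Union>(insert (insert e (\<Union>T)) (P - T)) = insert e X"
    using P(1) by (auto simp: T_def)
  ultimately show ?case
    using disjoint_family_on_Union_merge[OF P(2), of e, folded T_def] P(3)
    by (intro exI[of _ "insert (insert e (\<Union>T)) (P - T)"]) auto
qed

lemma exists_resplit_of_blocks: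
  assumes "Y \<inter> Z = {}" "Y \<union> Z = D" "\<Union>Y \<inter> \<Union>Z = {}"
  obtains N1 N2 where "is_matching E N1" "is_matching E N2"
    "\<And>S. finite S \<Longrightarrow> card (S \<inter> \<Union>N1) + card (S \<inter> \<Union>N2) = card (S \<inter> \<Union>M1) + card (S \<inter> \<Union>M2)"
    "\<And>S. finite S \<Longrightarrow> int (card (S \<inter> \<Union>N1)) - int (card (S \<inter> \<Union>N2))
        = (\<Sum>v\<in>S. signed_degree M1 Y v - signed_degree M1 Z v)"
proof
  let ?N1 = "M1 \<inter> M2 \<union> Y \<inter> M1 \<union> (Z - M1)" and ?N2 = "M1 \<inter> M2 \<union> Z \<inter> M1 \<union> (Y - M1)"
  have YZ: "Y \<subseteq> M1 \<union> M2" "Z \<subseteq> M1 \<union> M2" "\<Union>Z \<inter> \<Union>Y = {}" using assms(2,3) by auto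
  show N1: "is_matching E ?N1" by (rule swap_is_matching[OF matching_M1 matching_M2 YZ(2) assms(3)])
  show N2: "is_matching E ?N2" by (rule swap_is_matching[OF matching_M1 matching_M2 YZ(1,3)])
  have "finite Y" "finite Z" using assms(2) finite_subset_D by auto
  then have fin: "finite ?N1" "finite ?N2" "finite M1" "finite M2" using finite_M12 by auto
  fix S :: "'v set" assume S: "finite S"
  note card = card_Int_Union_matching[OF S]
  show "card (S \<inter> \<Union>?N1) + card (S \<inter> \<Union>?N2) = card (S \<inter> \<Union>M1) + card (S \<inter> \<Union>M2)"
  proof -
    have "int (card (S \<inter> \<Union>?N1)) + int (card (S \<inter> \<Union>?N2))
        = int (card (S \<inter> \<Union>M1)) + int (card (S \<inter> \<Union>M2))"
      unfolding card[OF fin(1) N1] card[OF fin(2) N2] card[OF fin(3) matching_M1]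
        card[OF fin(4) matching_M2] sum.distrib[symmetric]
      using degree_in_swap(1)[OF finite_M12 assms(1,2)] by simp
    then show ?thesis by linarith
  qed
  show "int (card (S \<inter> \<Union>?N1)) - int (card (S \<inter> \<Union>?N2))
      = (\<Sum>v\<in>S. signed_degree M1 Y v - signed_degree M1 Z v)"
    unfolding card[OF fin(1) N1] card[OF fin(2) N2] sum_subtractf[symmetric]
    using degree_in_swap(2)[OF finite_M12 assms(1,2)] by simp
qed

lemma separation_of_subfamily:
  assumes "disjoint_family_on Union P" "\<forall>B\<in>P. B \<subseteq> D" "Q \<subseteq> P"
  shows "\<Union>Q \<inter> \<Union>(P - Q) = {}" "\<Union>(\<Union>Q) \<inter> \<Union>(\<Union>(P - Q)) = {}"
proof -
  have apart: "X \<inter> X' = {}" "\<Union>X \<inter> \<Union>X' = {}" if "X \<in> Q" "X' \<in> P - Q" for X X'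
  proof -
    have "X \<in> P" "X' \<in> P" "X \<noteq> X'" using that assms(3) by auto
    then show "X \<inter> X' = {}" "\<Union>X \<inter> \<Union>X' = {}"
      using disjoint_if_vertex_disjoint[OF assms(1,2)] assms(1)
      unfolding pairwise_def disjnt_def disjoint_family_on_def by auto
  qed
  show "\<Union>Q \<inter> \<Union>(P - Q) = {}"
  proof (rule equals0I)
    fix f assume "f \<in> \<Union>Q \<inter> \<Union>(P - Q)"
    then obtain X X' where "X \<in> Q" "X' \<in> P - Q" "f \<in> X" "f \<in> X'" by blast
    then show False using apart(1) by blast
  qed
  show "\<Union>(\<Union>Q) \<inter> \<Union>(\<Union>(P - Q)) = {}"
  proof (rule equals0I)
    fix v assume "v \<in> \<Union>(\<Union>Q) \<inter> \<Union>(\<Union>(P - Q))"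
    then obtain X X' where "X \<in> Q" "X' \<in> P - Q" "v \<in> \<Union>X" "v \<in> \<Union>X'" by blast
    then show False using apart(2) by blast
  qed
qed

lemma signed_degree_signed_blocks:
  assumes "disjoint_family_on Union P" "\<forall>B\<in>P. B \<subseteq> D" "\<forall>B. \<epsilon> B = 1 \<or> \<epsilon> B = -1"
  defines "Q \<equiv> {B\<in>P. \<epsilon> B = 1}"
  shows "signed_degree M1 (\<Union>Q) v - signed_degree M1 (\<Union>(P - Q)) v
    = (\<Sum>B\<in>P. \<epsilon> B * signed_degree M1 B v)"
proof -
  have fin: "\<forall>B\<in>Q. finite B" "\<forall>B\<in>P - Q. finite B"
    using assms(2) finite_subset_D unfolding Q_def by auto
  have disj: "disjoint Q" "disjoint (P - Q)"
    using disjoint_if_vertex_disjoint[OF assms(1,2)] unfolding Q_def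
    by (auto intro: pairwise_subset)
  have "(\<Sum>B\<in>P. \<epsilon> B * signed_degree M1 B v)
      = (\<Sum>B\<in>Q. signed_degree M1 B v) - (\<Sum>B\<in>P - Q. signed_degree M1 B v)"
    unfolding Q_def by (rule sum_signs_eq_diff[OF finite_blocks[OF assms(2)] assms(3)])
  then show ?thesis
    unfolding signed_degree_Union[OF fin(1) disj(1)] signed_degree_Union[OF fin(2) disj(2)] ..
qed

lemma exists_balanced_resplit:
  assumes "finite I" "\<And>i. i \<in> I \<Longrightarrow> p i \<subseteq> V" "disjoint_family_on p I"
  obtains N1 N2 where "is_matching E N1" "is_matching E N2"
    "\<And>i. i \<in> I \<Longrightarrow> card (p i \<inter> \<Union>N1) + card (p i \<inter> \<Union>N2)
        = card (p i \<inter> \<Union>M1) + card (p i \<inter> \<Union>M2)"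
    "\<And>i. i \<in> I \<Longrightarrow> \<bar>int (card (p i \<inter> \<Union>N1)) - int (card (p i \<inter> \<Union>N2))\<bar> \<le> 2"
proof -
  obtain P where P: "\<Union>P = D" "disjoint_family_on Union P" "\<forall>B\<in>P. imbalance M1 V B \<le> 2"
    using exists_partition_imbalance_le_2[OF subset_refl] by blast
  have blocks: "\<forall>B\<in>P. B \<subseteq> D" using P(1) by blast
  define a where "a B i = (\<Sum>v\<in>p i. signed_degree M1 B v)" for B i
  have "(\<Sum>i\<in>I. \<bar>a B i\<bar>) \<le> imbalance M1 V B" for B
    unfolding a_def imbalance_def by (rule sum_abs_sum_parts_le[OF finite_V assms])
  then have "\<forall>B\<in>P. (\<Sum>i\<in>I. \<bar>a B i\<bar>) \<le> 2" using P(3) by (meson order_trans)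
  then obtain \<epsilon> where \<epsilon>: "\<forall>B. \<epsilon> B = 1 \<or> \<epsilon> B = -1" "\<forall>i\<in>I. \<bar>\<Sum>B\<in>P. \<epsilon> B * a B i\<bar> \<le> 2"
    using signing_of_l1_le_2_vectors[OF finite_blocks[OF blocks] assms(1)] by blast
  define Q where "Q = {B\<in>P. \<epsilon> B = 1}"
  have cover: "\<Union>Q \<union> \<Union>(P - Q) = D" using P(1) by (auto simp: Q_def)
  have sep: "\<Union>Q \<inter> \<Union>(P - Q) = {}" "\<Union>(\<Union>Q) \<inter> \<Union>(\<Union>(P - Q)) = {}"
    using separation_of_subfamily[OF P(2) blocks, of Q] by (auto simp: Q_def)
  obtain N1 N2 where N: "is_matching E N1" "is_matching E N2"
    "\<And>S. finite S \<Longrightarrow> card (S \<inter> \<Union>N1) + card (S \<inter> \<Union>N2) = card (S \<inter> \<Union>M1) + card (S \<inter> \<Union>M2)"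
    "\<And>S. finite S \<Longrightarrow> int (card (S \<inter> \<Union>N1)) - int (card (S \<inter> \<Union>N2))
        = (\<Sum>v\<in>S. signed_degree M1 (\<Union>Q) v - signed_degree M1 (\<Union>(P - Q)) v)"
    using exists_resplit_of_blocks[OF sep(1) cover sep(2)] by blast
  show ?thesis
  proof (rule that[OF N(1,2)])
    fix i assume i: "i \<in> I"
    have fin: "finite (p i)" using finite_subset[OF assms(2)[OF i] finite_V] .
    show "card (p i \<inter> \<Union>N1) + card (p i \<inter> \<Union>N2) = card (p i \<inter> \<Union>M1) + card (p i \<inter> \<Union>M2)"
      using N(3)[OF fin] .
    have "int (card (p i \<inter> \<Union>N1)) - int (card (p i \<inter> \<Union>N2)) = (\<Sum>B\<in>P. \<epsilon> B * a B i)"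
      unfolding N(4)[OF fin] signed_degree_signed_blocks[OF P(2) blocks \<epsilon>(1), folded Q_def]
        a_def sum_distrib_left
      by (rule sum.swap)
    then show "\<bar>int (card (p i \<inter> \<Union>N1)) - int (card (p i \<inter> \<Union>N2))\<bar> \<le> 2"
      using \<epsilon>(2) i by simp
  qed
qed

end

section \<open>The mechanism\<close>

lemma valid_instance_edgeE:
  assumes "valid_instance I" "e \<in> edges I"
  obtains u v where "e = {u, v}" "u \<in> verts I" "v \<in> verts I" "u \<noteq> v"
  using assms unfolding valid_instance_def by blast

lemma two_matchings_instance:
  assumes "valid_instance I" "is_matching (edges I) M1" "is_matching (edges I) M2"
  shows "two_matchings (edges I) M1 M2 (verts I)"
proof
  show "finite (verts I)" using assms(1) unfolding valid_instance_def by simp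
  fix e assume "e \<in> edges I"
  then show "e \<subseteq> verts I" "card e = 2"
    by (auto elim: valid_instance_edgeE[OF assms(1)])
qed (fact assms(2,3))+

lemma finite_set_pmf_mechanism:
  assumes "mechanism F" "valid_instance I"
  shows "finite (set_pmf (F I))"
proof -
  have "edges I \<subseteq> Pow (verts I)" by (auto elim: valid_instance_edgeE[OF assms(2)])
  then have "finite (edges I)"
    using assms(2) unfolding valid_instance_def by (meson finite_Pow_iff finite_subset)
  moreover have "set_pmf (F I) \<subseteq> Pow (edges I)"
    using assms unfolding mechanism_def is_matching_def by auto
  ultimately show ?thesis by (meson finite_Pow_iff finite_subset)
qed

definition balanced_resplit ::
    "'v kx_instance \<Rightarrow> 'v set set \<Rightarrow> 'v set set \<Rightarrow> 'v set set \<times> 'v set set \<Rightarrow> bool" where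
  "balanced_resplit I M1 M2 N \<longleftrightarrow>
     is_matching (edges I) (fst N) \<and> is_matching (edges I) (snd N) \<and>
     (\<forall>i<agents I. utility I i (fst N) + utility I i (snd N) = utility I i M1 + utility I i M2 \<and>
        \<bar>utility I i (fst N) - utility I i (snd N)\<bar> \<le> 2)"

lemma exists_balanced_resplit_instance:
  assumes "valid_instance I" "is_matching (edges I) M1" "is_matching (edges I) M2"
  shows "\<exists>N. balanced_resplit I M1 M2 N"
proof -
  interpret two_matchings "edges I" M1 M2 "verts I"
    by (rule two_matchings_instance[OF assms])
  have parts: "parts I i \<subseteq> verts I" if "i \<in> {..<agents I}" for i
    using assms(1) that unfolding valid_instance_def by blast
  have disjoint: "disjoint_family_on (parts I) {..<agents I}"
    using assms(1) unfolding valid_instance_def by blast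
  obtain N1 N2 where N: "is_matching (edges I) N1" "is_matching (edges I) N2"
    "\<And>i. i \<in> {..<agents I} \<Longrightarrow> card (parts I i \<inter> \<Union>N1) + card (parts I i \<inter> \<Union>N2)
        = card (parts I i \<inter> \<Union>M1) + card (parts I i \<inter> \<Union>M2)"
    "\<And>i. i \<in> {..<agents I} \<Longrightarrow>
        \<bar>int (card (parts I i \<inter> \<Union>N1)) - int (card (parts I i \<inter> \<Union>N2))\<bar> \<le> 2"
    using exists_balanced_resplit[OF finite_lessThan parts disjoint] by blast
  have "utility I i N1 + utility I i N2 = utility I i M1 + utility I i M2"
    "\<bar>utility I i N1 - utility I i N2\<bar> \<le> 2" if "i < agents I" for i
  proof -
    show "utility I i N1 + utility I i N2 = utility I i M1 + utility I i M2"
      unfolding utility_def using N(3)[of i] that by (simp flip: of_nat_add)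
    have "\<bar>utility I i N1 - utility I i N2\<bar>
        = of_int \<bar>int (card (parts I i \<inter> \<Union>N1)) - int (card (parts I i \<inter> \<Union>N2))\<bar>"
      unfolding utility_def by simp
    then show "\<bar>utility I i N1 - utility I i N2\<bar> \<le> 2" using N(4)[of i] that by simp
  qed
  then have "balanced_resplit I M1 M2 (N1, N2)" unfolding balanced_resplit_def using N(1,2) by simp
  then show ?thesis ..
qed

definition resplit :: "'v kx_instance \<Rightarrow> 'v set set \<Rightarrow> 'v set set \<Rightarrow> 'v set set \<times> 'v set set" where
  "resplit I M1 M2 = (SOME N. balanced_resplit I M1 M2 N)"

definition resplit_mechanism ::
    "('v kx_instance \<Rightarrow> 'v set set pmf) \<Rightarrow> 'v kx_instance \<Rightarrow> 'v set set pmf" where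
  "resplit_mechanism F I =
     F I \<bind> (\<lambda>a. F I \<bind> (\<lambda>b. pmf_of_set {fst (resplit I a b), snd (resplit I a b)}))"

lemma balanced_resplit_resplit:
  assumes "mechanism F" "valid_instance I" "a \<in> set_pmf (F I)" "b \<in> set_pmf (F I)"
  shows "balanced_resplit I a b (resplit I a b)"
proof -
  have "is_matching (edges I) a" "is_matching (edges I) b"
    using assms unfolding mechanism_def by blast+
  then show ?thesis
    unfolding resplit_def by (rule someI_ex[OF exists_balanced_resplit_instance[OF assms(2)]])
qed

lemma mechanism_resplit_mechanism:
  assumes "mechanism F"
  shows "mechanism (resplit_mechanism F)"
  unfolding mechanism_def
proof (intro allI impI ballI)
  fix I M assume "valid_instance I" "M \<in> set_pmf (resplit_mechanism F I)"
  then obtain a b where "a \<in> set_pmf (F I)" "b \<in> set_pmf (F I)"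
    "M \<in> {fst (resplit I a b), snd (resplit I a b)}"
    unfolding resplit_mechanism_def by auto
  then show "is_matching (edges I) M"
    using balanced_resplit_resplit[OF assms \<open>valid_instance I\<close>]
    unfolding balanced_resplit_def by blast
qed

lemma moments_resplit_mechanism:
  assumes "mechanism F" "valid_instance I" "i < agents I"
  shows "measure_pmf.expectation (resplit_mechanism F I) (utility I i)
      = measure_pmf.expectation (F I) (utility I i)"
    and "measure_pmf.variance (resplit_mechanism F I) (utility I i)
      \<le> measure_pmf.variance (F I) (utility I i) / 2 + 1"
  unfolding resplit_mechanism_def
  using expectation_variance_balanced_resplit[OF finite_set_pmf_mechanism[OF assms(1,2)],
      of "utility I i" "\<lambda>a b. fst (resplit I a b)" "\<lambda>a b. snd (resplit I a b)"]
    balanced_resplit_resplit[OF assms(1,2)] assms(3)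
  unfolding balanced_resplit_def by simp_all

theorem lemma2:
  fixes F :: "'v kx_instance \<Rightarrow> 'v set set pmf"
  assumes "mechanism F"
  shows "\<exists>F'. mechanism F' \<and>
    (\<forall>I. valid_instance I \<longrightarrow> (\<forall>i<agents I.
       measure_pmf.variance (F' I) (utility I i)
         \<le> measure_pmf.variance (F I) (utility I i) / 2 + 1 \<and>
       measure_pmf.expectation (F' I) (utility I i)
         = measure_pmf.expectation (F I) (utility I i)))"
  using mechanism_resplit_mechanism[OF assms] moments_resplit_mechanism[OF assms]
  by blast

end
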